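(* Let $\alpha>1$ and let $m_0\in\mathrm{BUC}([0,\infty))$ be non-decreasing with $m_0(0)=0$, $M=\sup m_0>0$, and suppose there is $c_0\in(0,\infty)$ with $m_0(\rho)<M$ for $\rho<c_0$ and $m_0(\rho)=M$ for $\rho\ge c_0$. If $$\limsup_{\rho\to c_0^-}\frac{M-m_0(\rho)}{(c_0-\rho)^{\frac\alpha{\alpha-1}}}=+\infty,$$ then there is no waiting time: for every $t>0$, the viscosity solution $m$ of the mass problem with datum $m_0$ satisfies $S(t):=\inf\{\rho: m(t,\rho)=M\}>c_0$.
   Context: $\mathrm{BUC}$ denotes bounded uniformly continuous functions. The mass problem is $m_t+(m_\rho)_+^\alpha m=0$ ($t,\rho>0$), $m(t,0)=0$, $m(0,\cdot)=m_0$, in the viscosity sense: with Fréchet super/subdifferentials $D^\pm$, a continuous $m$ is a subsolution if $p_1+(p_2)_+^\alpha m\le0$ for $(p_1,p_2)\in D^+m(t,\rho)$, $m(0,\cdot)\le m_0$, $m(t,0)\le0$; a supersolution with reversed inequalities and $D^-$; a solution if both. For $m_0\in\mathrm{BUC}$ non-decreasing with $m_0(0)=0$ a unique $\mathrm{BUC}$ viscosity solution exists and a comparison principle holds. *)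

theory Defs
  imports "HOL-Analysis.Analysis"
begin

definition quadrant :: "(real \<times> real) set" where
  "quadrant = {0..} \<times> {0..}"

definition frechet_superdiff :: "(real \<Rightarrow> real \<Rightarrow> real) \<Rightarrow> real \<Rightarrow> real \<Rightarrow> (real \<times> real) set" where
  "frechet_superdiff u t \<rho> = {(p1, p2). \<forall>\<epsilon>>0. \<exists>\<delta>>0. \<forall>s r. s \<ge> 0 \<longrightarrow> r \<ge> 0 \<longrightarrow>
      norm ((s, r) - (t, \<rho>)) < \<delta> \<longrightarrow>
      u s r - u t \<rho> - p1 * (s - t) - p2 * (r - \<rho>) \<le> \<epsilon> * norm ((s, r) - (t, \<rho>))}"

definition frechet_subdiff :: "(real \<Rightarrow> real \<Rightarrow> real) \<Rightarrow> real \<Rightarrow> real \<Rightarrow> (real \<times> real) set" where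
  "frechet_subdiff u t \<rho> = {(p1, p2). \<forall>\<epsilon>>0. \<exists>\<delta>>0. \<forall>s r. s \<ge> 0 \<longrightarrow> r \<ge> 0 \<longrightarrow>
      norm ((s, r) - (t, \<rho>)) < \<delta> \<longrightarrow>
      u s r - u t \<rho> - p1 * (s - t) - p2 * (r - \<rho>) \<ge> - \<epsilon> * norm ((s, r) - (t, \<rho>))}"

definition posp_pow :: "real \<Rightarrow> real \<Rightarrow> real" where
  "posp_pow \<alpha> p = (max p 0) powr \<alpha>"

definition mass_subsolution :: "real \<Rightarrow> (real \<Rightarrow> real) \<Rightarrow> (real \<Rightarrow> real \<Rightarrow> real) \<Rightarrow> bool" where
  "mass_subsolution \<alpha> m0 m \<longleftrightarrow>
     continuous_on quadrant (\<lambda>(t, \<rho>). m t \<rho>) \<and>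
     (\<forall>t>0. \<forall>\<rho>>0. \<forall>(p1, p2) \<in> frechet_superdiff m t \<rho>. p1 + posp_pow \<alpha> p2 * m t \<rho> \<le> 0) \<and>
     (\<forall>\<rho>\<ge>0. m 0 \<rho> \<le> m0 \<rho>) \<and> (\<forall>t\<ge>0. m t 0 \<le> 0)"

definition mass_supersolution :: "real \<Rightarrow> (real \<Rightarrow> real) \<Rightarrow> (real \<Rightarrow> real \<Rightarrow> real) \<Rightarrow> bool" where
  "mass_supersolution \<alpha> m0 m \<longleftrightarrow>
     continuous_on quadrant (\<lambda>(t, \<rho>). m t \<rho>) \<and>
     (\<forall>t>0. \<forall>\<rho>>0. \<forall>(p1, p2) \<in> frechet_subdiff m t \<rho>. p1 + posp_pow \<alpha> p2 * m t \<rho> \<ge> 0) \<and>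
     (\<forall>\<rho>\<ge>0. m 0 \<rho> \<ge> m0 \<rho>) \<and> (\<forall>t\<ge>0. m t 0 \<ge> 0)"

definition mass_solution :: "real \<Rightarrow> (real \<Rightarrow> real) \<Rightarrow> (real \<Rightarrow> real \<Rightarrow> real) \<Rightarrow> bool" where
  "mass_solution \<alpha> m0 m \<longleftrightarrow> mass_subsolution \<alpha> m0 m \<and> mass_supersolution \<alpha> m0 m"

definition BUC1 :: "(real \<Rightarrow> real) \<Rightarrow> bool" where
  "BUC1 f \<longleftrightarrow> bounded (f ` {0..}) \<and> uniformly_continuous_on {0..} f"

definition BUC2 :: "(real \<Rightarrow> real \<Rightarrow> real) \<Rightarrow> bool" where
  "BUC2 u \<longleftrightarrow> bounded ((\<lambda>(t, \<rho>). u t \<rho>) ` quadrant) \<and>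
     uniformly_continuous_on quadrant (\<lambda>(t, \<rho>). u t \<rho>)"

text \<open>Free boundary S(t) = inf{rho >= 0 : m(t,rho) = M}, as an extended real (inf of empty set = +inf).\<close>
definition free_boundary :: "(real \<Rightarrow> real \<Rightarrow> real) \<Rightarrow> real \<Rightarrow> real \<Rightarrow> ereal" where
  "free_boundary m M t = Inf (ereal ` {\<rho>. \<rho> \<ge> 0 \<and> m t \<rho> = M})"

end

theory Submission
  imports Defs
begin

(*
  Behind the plateau edge c0 the datum rises to M more steeply than (c0 - rho)^beta,
  beta = alpha/(alpha - 1).  The Hamilton-Jacobi operator m_t + K (m_rho)_+^alpha has the
  self-similar supersolutions C (rho - b)_+^beta (t + tau)^(1 - beta) for large C, so
  min M (M - delta + C (rho - b)_+^beta (t + tau)^(1 - beta)) is an upper barrier.  At a point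
  rho1 < c0 where M - m0 rho1 is large compared with (c0 - rho1)^beta, the parameters can be
  tuned so that the barrier lies above m0 initially, and by comparison m stays strictly
  below M at time t0 on an interval reaching beyond c0.
*)

lemma posp_pow_has_real_derivative:
  assumes "\<beta> > 1"
  shows "(posp_pow \<beta> has_real_derivative \<beta> * posp_pow (\<beta> - 1) x) (at x)"
proof -
  consider "x > 0" | "x < 0" | "x = 0" by linarith
  then show ?thesis
  proof cases
    case 1
    have "((\<lambda>y. y powr \<beta>) has_real_derivative \<beta> * x powr (\<beta> - 1)) (at x)"
      using 1 by (rule has_real_derivative_powr)
    then have "(posp_pow \<beta> has_real_derivative \<beta> * x powr (\<beta> - 1)) (at x)"
      by (rule has_field_derivative_transform_within_open[where S="{0<..}"])
        (use 1 in \<open>auto simp: posp_pow_def\<close>)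
    then show ?thesis
      using 1 by (simp add: posp_pow_def)
  next
    case 2
    have "((\<lambda>y. 0) has_real_derivative 0) (at x)" by simp
    then have "(posp_pow \<beta> has_real_derivative 0) (at x)"
      by (rule has_field_derivative_transform_within_open[where S="{..<0}"])
        (use 2 in \<open>auto simp: posp_pow_def\<close>)
    then show ?thesis
      using 2 by (simp add: posp_pow_def)
  next
    case 3
    have lim: "((\<lambda>y. \<bar>y\<bar> powr (\<beta> - 1)) \<longlongrightarrow> 0) (at 0)"
      using assms by (intro tendsto_zero_powrI tendsto_rabs_zero tendsto_ident_at) auto
    have "\<forall>y. norm (posp_pow \<beta> y / y) \<le> \<bar>y\<bar> powr (\<beta> - 1)"
    proof
      fix y :: real
      show "norm (posp_pow \<beta> y / y) \<le> \<bar>y\<bar> powr (\<beta> - 1)"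
      proof (cases "y > 0")
        case True
        then have "posp_pow \<beta> y / y = y powr (\<beta> - 1)"
          by (simp add: posp_pow_def powr_diff)
        then show ?thesis
          using True by simp
      qed (simp add: posp_pow_def)
    qed
    then have "((\<lambda>y. posp_pow \<beta> y / y) \<longlongrightarrow> 0) (at 0)"
      by (rule Lim_null_comparison[OF always_eventually lim])
    then show ?thesis
      using 3 by (simp add: has_field_derivative_iff posp_pow_def)
  qed
qed

lemma has_derivative_imp_frechet_superdiff:
  assumes "((\<lambda>z. u (fst z) (snd z)) has_derivative (\<lambda>z. p1 * fst z + p2 * snd z)) (at (t, \<rho>))"
  shows "(p1, p2) \<in> frechet_superdiff u t \<rho>"
  unfolding frechet_superdiff_def
proof (clarify, goal_cases)
  case (1 \<epsilon>)
  have "\<exists>\<delta>>0. \<forall>z. norm (z - (t, \<rho>)) < \<delta> \<longrightarrow>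
      norm (u (fst z) (snd z) - u t \<rho> - (p1 * fst (z - (t, \<rho>)) + p2 * snd (z - (t, \<rho>))))
        \<le> \<epsilon> * norm (z - (t, \<rho>))"
    using assms 1 unfolding has_derivative_at_alt by simp
  then obtain \<delta> where "\<delta> > 0" and \<delta>: "\<And>z. norm (z - (t, \<rho>)) < \<delta> \<Longrightarrow>
      norm (u (fst z) (snd z) - u t \<rho> - (p1 * fst (z - (t, \<rho>)) + p2 * snd (z - (t, \<rho>))))
        \<le> \<epsilon> * norm (z - (t, \<rho>))"
    by blast
  have "u s r - u t \<rho> - p1 * (s - t) - p2 * (r - \<rho>) \<le> \<epsilon> * norm ((s, r) - (t, \<rho>))"
    if "norm ((s, r) - (t, \<rho>)) < \<delta>" for s r
    using \<delta>[OF that] by simp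
  then show ?case
    using \<open>\<delta> > 0\<close> by blast
qed

lemma frechet_superdiffD:
  assumes "(p1, p2) \<in> frechet_superdiff u t \<rho>" and "\<epsilon> > 0"
  obtains \<delta> where "\<delta> > 0"
    and "\<And>s r. s \<ge> 0 \<Longrightarrow> r \<ge> 0 \<Longrightarrow> norm ((s, r) - (t, \<rho>)) < \<delta> \<Longrightarrow>
      u s r - u t \<rho> - p1 * (s - t) - p2 * (r - \<rho>) \<le> \<epsilon> * norm ((s, r) - (t, \<rho>))"
  using assms unfolding frechet_superdiff_def by auto

lemma frechet_superdiff_add:
  assumes "(p1, p2) \<in> frechet_superdiff u t \<rho>" and "(q1, q2) \<in> frechet_superdiff v t \<rho>"
  shows "(p1 + q1, p2 + q2) \<in> frechet_superdiff (\<lambda>s r. u s r + v s r) t \<rho>"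
  unfolding frechet_superdiff_def
proof (clarify, goal_cases)
  case (1 \<epsilon>)
  then have "\<epsilon> / 2 > 0" by simp
  obtain \<delta>u where "\<delta>u > 0"
    and u: "\<And>s r. s \<ge> 0 \<Longrightarrow> r \<ge> 0 \<Longrightarrow> norm ((s, r) - (t, \<rho>)) < \<delta>u \<Longrightarrow>
      u s r - u t \<rho> - p1 * (s - t) - p2 * (r - \<rho>) \<le> \<epsilon> / 2 * norm ((s, r) - (t, \<rho>))"
    using frechet_superdiffD[OF assms(1) \<open>\<epsilon> / 2 > 0\<close>] by blast
  obtain \<delta>v where "\<delta>v > 0"
    and v: "\<And>s r. s \<ge> 0 \<Longrightarrow> r \<ge> 0 \<Longrightarrow> norm ((s, r) - (t, \<rho>)) < \<delta>v \<Longrightarrow>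
      v s r - v t \<rho> - q1 * (s - t) - q2 * (r - \<rho>) \<le> \<epsilon> / 2 * norm ((s, r) - (t, \<rho>))"
    using frechet_superdiffD[OF assms(2) \<open>\<epsilon> / 2 > 0\<close>] by blast
  show ?case
  proof (rule exI[of _ "min \<delta>u \<delta>v"], intro conjI allI impI)
    show "min \<delta>u \<delta>v > 0"
      using \<open>\<delta>u > 0\<close> \<open>\<delta>v > 0\<close> by simp
    fix s r :: real
    assume "s \<ge> 0" "r \<ge> 0" and near: "norm ((s, r) - (t, \<rho>)) < min \<delta>u \<delta>v"
    have "u s r - u t \<rho> - p1 * (s - t) - p2 * (r - \<rho>) \<le> \<epsilon> / 2 * norm ((s, r) - (t, \<rho>))"
      using u[OF \<open>s \<ge> 0\<close> \<open>r \<ge> 0\<close>] near by linarith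
    moreover have "v s r - v t \<rho> - q1 * (s - t) - q2 * (r - \<rho>) \<le> \<epsilon> / 2 * norm ((s, r) - (t, \<rho>))"
      using v[OF \<open>s \<ge> 0\<close> \<open>r \<ge> 0\<close>] near by linarith
    ultimately show "u s r + v s r - (u t \<rho> + v t \<rho>) - (p1 + q1) * (s - t) - (p2 + q2) * (r - \<rho>)
        \<le> \<epsilon> * norm ((s, r) - (t, \<rho>))"
      by argo
  qed
qed

lemma frechet_superdiff_touching:
  assumes "\<delta> > 0"
    and "\<And>s r. s \<ge> 0 \<Longrightarrow> r \<ge> 0 \<Longrightarrow> norm ((s, r) - (t, \<rho>)) < \<delta> \<Longrightarrow> u s r - u t \<rho> \<le> w s r - w t \<rho>"
    and "(p1, p2) \<in> frechet_superdiff w t \<rho>"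
  shows "(p1, p2) \<in> frechet_superdiff u t \<rho>"
  unfolding frechet_superdiff_def
proof (clarify, goal_cases)
  case (1 \<epsilon>)
  obtain \<delta>w where "\<delta>w > 0"
    and w: "\<And>s r. s \<ge> 0 \<Longrightarrow> r \<ge> 0 \<Longrightarrow> norm ((s, r) - (t, \<rho>)) < \<delta>w \<Longrightarrow>
      w s r - w t \<rho> - p1 * (s - t) - p2 * (r - \<rho>) \<le> \<epsilon> * norm ((s, r) - (t, \<rho>))"
    using frechet_superdiffD[OF assms(3) 1] by blast
  show ?case
  proof (rule exI[of _ "min \<delta> \<delta>w"], intro conjI allI impI)
    show "min \<delta> \<delta>w > 0"
      using \<open>\<delta> > 0\<close> \<open>\<delta>w > 0\<close> by simp
    fix s r :: real
    assume "s \<ge> 0" "r \<ge> 0" and near: "norm ((s, r) - (t, \<rho>)) < min \<delta> \<delta>w"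
    then have "u s r - u t \<rho> \<le> w s r - w t \<rho>"
      and "w s r - w t \<rho> - p1 * (s - t) - p2 * (r - \<rho>) \<le> \<epsilon> * norm ((s, r) - (t, \<rho>))"
      using assms(2) w by simp_all
    then show "u s r - u t \<rho> - p1 * (s - t) - p2 * (r - \<rho>) \<le> \<epsilon> * norm ((s, r) - (t, \<rho>))"
      by linarith
  qed
qed

lemma frechet_superdiff_at_max:
  assumes "\<And>s r. w s r \<le> w t \<rho>"
  shows "(0, 0) \<in> frechet_superdiff w t \<rho>"
proof -
  have "(0, 0) \<in> frechet_superdiff (\<lambda>s r. w t \<rho>) t \<rho>"
    by (rule has_derivative_imp_frechet_superdiff) simp
  then show ?thesis
    by (rule frechet_superdiff_touching[OF zero_less_one, rotated]) (simp add: assms)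
qed

lemma frechet_superdiff_penalized_max:
  assumes "ts < T" and "\<delta> > 0"
    and max: "\<And>s r. s \<ge> 0 \<Longrightarrow> r \<ge> 0 \<Longrightarrow> norm ((s, r) - (ts, rs)) < \<delta> \<Longrightarrow>
      m s r - w s r - \<eta> / (T - s) \<le> m ts rs - w ts rs - \<eta> / (T - ts)"
    and "(p1, p2) \<in> frechet_superdiff w ts rs"
  shows "(p1 + \<eta> / (T - ts)\<^sup>2, p2) \<in> frechet_superdiff m ts rs"
proof -
  have "((\<lambda>z. \<eta> / (T - fst z)) has_derivative
      (\<lambda>z. - (\<eta> * (0 - fst z) / (T - fst (ts, rs)) / (T - fst (ts, rs))))) (at (ts, rs))"
    using \<open>ts < T\<close> by (intro derivative_eq_intros) auto
  then have "((\<lambda>z. \<eta> / (T - fst z)) has_derivative (\<lambda>z. \<eta> / (T - ts)\<^sup>2 * fst z + 0 * snd z)) (at (ts, rs))"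
    by (rule has_derivative_eq_rhs) (simp add: fun_eq_iff power2_eq_square)
  then have "(\<eta> / (T - ts)\<^sup>2, 0) \<in> frechet_superdiff (\<lambda>s r. \<eta> / (T - s)) ts rs"
    by (rule has_derivative_imp_frechet_superdiff)
  from frechet_superdiff_add[OF assms(4) this]
  have super: "(p1 + \<eta> / (T - ts)\<^sup>2, p2) \<in> frechet_superdiff (\<lambda>s r. w s r + \<eta> / (T - s)) ts rs"
    by simp
  have "m s r - m ts rs \<le> (w s r + \<eta> / (T - s)) - (w ts rs + \<eta> / (T - ts))"
    if "s \<ge> 0" "r \<ge> 0" "norm ((s, r) - (ts, rs)) < \<delta>" for s r
    using max[OF that] by linarith
  from frechet_superdiff_touching[OF \<open>\<delta> > 0\<close> this super]
  show ?thesis .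
qed

lemma continuous_attains_sup_rectangle:
  fixes g :: "real \<times> real \<Rightarrow> real"
  assumes "continuous_on ({a..b} \<times> {c..d}) g" and "z0 \<in> {a..b} \<times> {c..d}"
  obtains z where "z \<in> {a..b} \<times> {c..d}" and "\<And>y. y \<in> {a..b} \<times> {c..d} \<Longrightarrow> g y \<le> g z"
  using continuous_attains_sup[OF compact_Times[OF compact_Icc compact_Icc] _ assms(1)] assms(2)
  by blast

lemma penalized_max_below_top:
  fixes f :: "real \<times> real \<Rightarrow> real"
  assumes cont_f: "continuous_on ({0..T} \<times> {a..b}) f"
    and t0: "0 \<le> t0" "t0 < T" and \<rho>0: "a \<le> \<rho>0" "\<rho>0 \<le> b" and "f (t0, \<rho>0) > 0"
  obtains \<eta> \<sigma> ts rs where "\<eta> > 0" and "\<sigma> > 0" and "0 \<le> ts" "ts < T - \<sigma>" and "a \<le> rs" "rs \<le> b"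
    and "f (ts, rs) > \<eta> / (T - ts)"
    and "\<And>s r. 0 \<le> s \<Longrightarrow> s \<le> T - \<sigma> \<Longrightarrow> a \<le> r \<Longrightarrow> r \<le> b \<Longrightarrow>
      f (s, r) - \<eta> / (T - s) \<le> f (ts, rs) - \<eta> / (T - ts)"
proof -
  have "(t0, \<rho>0) \<in> {0..T} \<times> {a..b}"
    using t0 \<rho>0 by auto
  then obtain zL where "zL \<in> {0..T} \<times> {a..b}"
    and max_f: "\<And>z. z \<in> {0..T} \<times> {a..b} \<Longrightarrow> f z \<le> f zL"
    using continuous_attains_sup_rectangle[OF cont_f] by blast
  define L where "L = f zL"
  define \<theta> where "\<theta> = f (t0, \<rho>0)"
  have "\<theta> > 0" "\<theta> \<le> L"
    using \<open>f (t0, \<rho>0) > 0\<close> max_f \<open>(t0, \<rho>0) \<in> {0..T} \<times> {a..b}\<close> unfolding \<theta>_def L_def by auto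
  text \<open>The top edge \<open>T - \<sigma>\<close> is chosen so close to \<open>T\<close> that the penalty there exceeds \<open>L\<close>.\<close>
  define \<eta> where "\<eta> = \<theta> * (T - t0) / 2"
  define \<sigma> where "\<sigma> = min ((T - t0) / 2) (\<eta> / L)"
  have "\<eta> > 0" "\<sigma> > 0"
    using \<open>\<theta> > 0\<close> \<open>\<theta> \<le> L\<close> t0 unfolding \<eta>_def \<sigma>_def by auto
  have "\<sigma> \<le> (T - t0) / 2"
    unfolding \<sigma>_def by (rule min.cobounded1)
  then have "\<sigma> < T - t0"
    using t0 by argo
  have "\<sigma> * L \<le> \<eta>"
    using \<open>\<theta> > 0\<close> \<open>\<theta> \<le> L\<close> unfolding \<sigma>_def by (simp add: min_def field_simps)
  define \<Phi> where "\<Phi> z = f z - \<eta> / (T - fst z)" for z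
  have "{0..T - \<sigma>} \<times> {a..b} \<subseteq> {0..T} \<times> {a..b}"
    using \<open>\<sigma> > 0\<close> by auto
  then have "continuous_on ({0..T - \<sigma>} \<times> {a..b}) \<Phi>"
    unfolding \<Phi>_def using \<open>\<sigma> > 0\<close>
    by (intro continuous_intros continuous_on_subset[OF cont_f]) auto
  moreover have "(t0, \<rho>0) \<in> {0..T - \<sigma>} \<times> {a..b}"
    using t0 \<rho>0 \<open>\<sigma> < T - t0\<close> by auto
  ultimately obtain z where "z \<in> {0..T - \<sigma>} \<times> {a..b}"
    and "\<And>y. y \<in> {0..T - \<sigma>} \<times> {a..b} \<Longrightarrow> \<Phi> y \<le> \<Phi> z"
    by (rule continuous_attains_sup_rectangle) blast
  moreover obtain ts rs where "z = (ts, rs)"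
    by fastforce
  ultimately have ts_rs: "(ts, rs) \<in> {0..T - \<sigma>} \<times> {a..b}"
    and max: "\<And>y. y \<in> {0..T - \<sigma>} \<times> {a..b} \<Longrightarrow> \<Phi> y \<le> \<Phi> (ts, rs)"
    by auto
  have "\<Phi> (t0, \<rho>0) = \<theta> / 2"
    using t0 unfolding \<Phi>_def \<theta>_def \<eta>_def by (simp add: field_simps)
  then have "\<Phi> (ts, rs) > 0"
    using max \<open>(t0, \<rho>0) \<in> {0..T - \<sigma>} \<times> {a..b}\<close> \<open>\<theta> > 0\<close> by fastforce
  have "ts \<noteq> T - \<sigma>"
  proof
    assume "ts = T - \<sigma>"
    moreover have "(ts, rs) \<in> {0..T} \<times> {a..b}"
      using ts_rs \<open>\<sigma> > 0\<close> by auto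
    then have "f (ts, rs) \<le> L"
      unfolding L_def by (rule max_f)
    ultimately have "\<Phi> (ts, rs) \<le> L - \<eta> / \<sigma>"
      unfolding \<Phi>_def by simp
    also have "\<dots> \<le> 0"
      using \<open>\<sigma> * L \<le> \<eta>\<close> \<open>\<sigma> > 0\<close> by (simp add: field_simps)
    finally show False
      using \<open>\<Phi> (ts, rs) > 0\<close> by simp
  qed
  show ?thesis
  proof (rule that[OF \<open>\<eta> > 0\<close> \<open>\<sigma> > 0\<close>])
    show "0 \<le> ts" "ts < T - \<sigma>" "a \<le> rs" "rs \<le> b"
      using ts_rs \<open>ts \<noteq> T - \<sigma>\<close> by auto
    show "f (ts, rs) > \<eta> / (T - ts)"
      using \<open>\<Phi> (ts, rs) > 0\<close> unfolding \<Phi>_def by simp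
    show "f (s, r) - \<eta> / (T - s) \<le> f (ts, rs) - \<eta> / (T - ts)"
      if "0 \<le> s" "s \<le> T - \<sigma>" "a \<le> r" "r \<le> b" for s r
      using max[of "(s, r)"] that unfolding \<Phi>_def by simp
  qed
qed

text \<open>
  Unlike a viscosity supersolution, an upper barrier provides an element of its
  superdifferential satisfying the inequality at every level \<open>y \<ge> w t \<rho>\<close>: in the comparison
  argument it is evaluated at the value of the subsolution, which exceeds \<open>w t \<rho>\<close> there.
\<close>
definition upper_barrier_at :: "real \<Rightarrow> (real \<Rightarrow> real \<Rightarrow> real) \<Rightarrow> real \<Rightarrow> real \<Rightarrow> bool" where
  "upper_barrier_at \<alpha> w t \<rho> \<longleftrightarrow>
     (\<exists>p1 p2. (p1, p2) \<in> frechet_superdiff w t \<rho> \<and> (\<forall>y \<ge> w t \<rho>. p1 + posp_pow \<alpha> p2 * y \<ge> 0))"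

lemma comparison_on_rectangle:
  fixes m w :: "real \<Rightarrow> real \<Rightarrow> real"
  assumes contm: "continuous_on quadrant (\<lambda>(t, \<rho>). m t \<rho>)"
    and sub: "\<forall>t>0. \<forall>\<rho>>0. \<forall>(p1, p2) \<in> frechet_superdiff m t \<rho>. p1 + posp_pow \<alpha> p2 * m t \<rho> \<le> 0"
    and "a \<ge> 0"
    and contw: "continuous_on ({0..T} \<times> {a..b}) (\<lambda>(t, \<rho>). w t \<rho>)"
    and init: "\<forall>\<rho>\<in>{a..b}. m 0 \<rho> \<le> w 0 \<rho>"
    and sides: "\<forall>t\<in>{0..T}. m t a \<le> w t a \<and> m t b \<le> w t b"
    and super: "\<forall>t\<in>{0<..<T}. \<forall>\<rho>\<in>{a<..<b}. upper_barrier_at \<alpha> w t \<rho>"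
  shows "\<forall>t\<in>{0..<T}. \<forall>\<rho>\<in>{a..b}. m t \<rho> \<le> w t \<rho>"
proof (rule ccontr)
  assume "\<not> ?thesis"
  then obtain t0 \<rho>0 where t0: "0 \<le> t0" "t0 < T" and \<rho>0: "a \<le> \<rho>0" "\<rho>0 \<le> b"
    and violation: "m t0 \<rho>0 > w t0 \<rho>0"
    by auto
  define f where "f z = m (fst z) (snd z) - w (fst z) (snd z)" for z
  have "{0..T} \<times> {a..b} \<subseteq> quadrant"
    using \<open>a \<ge> 0\<close> unfolding quadrant_def by auto
  then have "continuous_on ({0..T} \<times> {a..b}) f"
    using continuous_on_subset[OF contm] contw unfolding f_def case_prod_beta'
    by (intro continuous_intros) auto
  moreover have "f (t0, \<rho>0) > 0"
    using violation unfolding f_def by simp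
  ultimately obtain \<eta> \<sigma> ts rs where "\<eta> > 0" "\<sigma> > 0" and ts: "0 \<le> ts" "ts < T - \<sigma>" and rs: "a \<le> rs" "rs \<le> b"
    and gt: "f (ts, rs) > \<eta> / (T - ts)"
    and max: "\<And>s r. 0 \<le> s \<Longrightarrow> s \<le> T - \<sigma> \<Longrightarrow> a \<le> r \<Longrightarrow> r \<le> b \<Longrightarrow>
      f (s, r) - \<eta> / (T - s) \<le> f (ts, rs) - \<eta> / (T - ts)"
    using penalized_max_below_top t0 \<rho>0 by blast
  have "\<eta> / (T - ts) > 0"
    using \<open>\<eta> > 0\<close> ts \<open>\<sigma> > 0\<close> by simp
  then have m_gt_w: "m ts rs > w ts rs"
    using gt unfolding f_def by simp
  then have "ts \<noteq> 0" "rs \<noteq> a" "rs \<noteq> b"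
    using init sides ts rs \<open>\<sigma> > 0\<close> by force+
  then have interior: "(ts, rs) \<in> {0<..<T - \<sigma>} \<times> {a<..<b}"
    using ts rs by auto
  then obtain \<delta> where "\<delta> > 0" and ball: "ball (ts, rs) \<delta> \<subseteq> {0<..<T - \<sigma>} \<times> {a<..<b}"
    using openE[OF open_Times[OF open_greaterThanLessThan open_greaterThanLessThan]] by blast
  obtain p1 p2 where "(p1, p2) \<in> frechet_superdiff w ts rs"
    and super_ts: "\<forall>y \<ge> w ts rs. p1 + posp_pow \<alpha> p2 * y \<ge> 0"
    using super interior \<open>\<sigma> > 0\<close> unfolding upper_barrier_at_def by force
  have "m s r - w s r - \<eta> / (T - s) \<le> m ts rs - w ts rs - \<eta> / (T - ts)"
    if "norm ((s, r) - (ts, rs)) < \<delta>" for s r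
  proof -
    have "(s, r) \<in> ball (ts, rs) \<delta>"
      using that by (metis dist_commute dist_norm mem_ball)
    then show ?thesis
      using ball max[of s r] unfolding f_def by fastforce
  qed
  then have "(p1 + \<eta> / (T - ts)\<^sup>2, p2) \<in> frechet_superdiff m ts rs"
    using frechet_superdiff_penalized_max[OF _ \<open>\<delta> > 0\<close> _ \<open>(p1, p2) \<in> frechet_superdiff w ts rs\<close>]
      ts \<open>\<sigma> > 0\<close> by fastforce
  moreover have "ts > 0" "rs > 0"
    using interior \<open>a \<ge> 0\<close> by auto
  ultimately have "p1 + \<eta> / (T - ts)\<^sup>2 + posp_pow \<alpha> p2 * m ts rs \<le> 0"
    using sub by fastforce
  text \<open>The penalty raised the time component of the superdifferential by \<open>\<eta> / (T - ts)\<^sup>2 > 0\<close>.\<close>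
  moreover have "p1 + posp_pow \<alpha> p2 * m ts rs \<ge> 0"
    using super_ts m_gt_w by simp
  moreover have "\<eta> / (T - ts)\<^sup>2 > 0"
    using \<open>\<eta> > 0\<close> ts \<open>\<sigma> > 0\<close> by simp
  ultimately show False
    by linarith
qed

lemma upper_barrier_at_affine:
  assumes "M \<ge> 0" and "\<eta> \<ge> 0" and "r \<ge> 0"
  shows "upper_barrier_at \<alpha> (\<lambda>s r. M + \<eta> * r) t r"
proof -
  have "((\<lambda>z. M + \<eta> * snd z) has_derivative (\<lambda>z. 0 * fst z + \<eta> * snd z)) (at (t, r))"
    by (rule has_derivative_eq_rhs[OF has_derivative_add[OF has_derivative_const
          has_derivative_mult_right[OF has_derivative_snd[OF has_derivative_ident]]]]) simp
  then have "(0, \<eta>) \<in> frechet_superdiff (\<lambda>s r. M + \<eta> * r) t r"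
    by (rule has_derivative_imp_frechet_superdiff)
  moreover have "0 + posp_pow \<alpha> \<eta> * y \<ge> 0" if "y \<ge> M + \<eta> * r" for y
  proof -
    have "y \<ge> 0"
      using that assms by (smt (verit) mult_nonneg_nonneg)
    then show ?thesis
      unfolding posp_pow_def by simp
  qed
  ultimately show ?thesis
    unfolding upper_barrier_at_def by blast
qed

lemma mass_subsolution_le_bound:
  fixes m :: "real \<Rightarrow> real \<Rightarrow> real"
  assumes "mass_subsolution \<alpha> m0 m" and m0_le: "\<forall>\<rho>\<ge>0. m0 \<rho> \<le> M" and "M \<ge> 0"
    and bounded: "\<forall>t\<ge>0. \<forall>\<rho>\<ge>0. m t \<rho> \<le> K" and "t \<ge> 0" and "\<rho> \<ge> 0"
  shows "m t \<rho> \<le> M"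
proof (rule ccontr)
  assume "\<not> m t \<rho> \<le> M"
  have contm: "continuous_on quadrant (\<lambda>(t, \<rho>). m t \<rho>)"
    and sub: "\<forall>t>0. \<forall>\<rho>>0. \<forall>(p1, p2) \<in> frechet_superdiff m t \<rho>. p1 + posp_pow \<alpha> p2 * m t \<rho> \<le> 0"
    and side: "\<forall>t\<ge>0. m t 0 \<le> 0"
    using \<open>mass_subsolution \<alpha> m0 m\<close> unfolding mass_subsolution_def by auto
  have init: "\<forall>\<rho>\<ge>0. m 0 \<rho> \<le> M"
    using \<open>mass_subsolution \<alpha> m0 m\<close> m0_le unfolding mass_subsolution_def by (meson order_trans)
  text \<open>The affine barrier \<open>M + \<eta> r\<close> stays below \<open>m t \<rho>\<close> at \<open>r = \<rho>\<close> and above \<open>K\<close> at \<open>r = B\<close>.\<close>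
  define \<eta> where "\<eta> = (m t \<rho> - M) / (2 * (\<rho> + 1))"
  have "\<eta> > 0"
    using \<open>\<not> m t \<rho> \<le> M\<close> \<open>\<rho> \<ge> 0\<close> unfolding \<eta>_def by simp
  have "\<eta> * \<rho> = (m t \<rho> - M) * (\<rho> / (2 * (\<rho> + 1)))"
    unfolding \<eta>_def by simp
  also have "\<dots> < (m t \<rho> - M) * 1"
    using \<open>\<not> m t \<rho> \<le> M\<close> \<open>\<rho> \<ge> 0\<close> by (intro mult_strict_left_mono) auto
  finally have "\<eta> * \<rho> < m t \<rho> - M"
    by simp
  define B where "B = \<rho> + \<bar>K\<bar> / \<eta>"
  have "\<rho> \<le> B" "\<eta> * B \<ge> \<bar>K\<bar>"
    using \<open>\<eta> > 0\<close> \<open>\<rho> \<ge> 0\<close> unfolding B_def by (auto simp: field_simps)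
  have "\<forall>s\<in>{0..<t + 1}. \<forall>r\<in>{0..B}. m s r \<le> M + \<eta> * r"
  proof (rule comparison_on_rectangle[OF contm sub order_refl])
    show "continuous_on ({0..t + 1} \<times> {0..B}) (\<lambda>(s, r). M + \<eta> * r)"
      unfolding case_prod_beta' by (intro continuous_intros)
    show "\<forall>r\<in>{0..B}. m 0 r \<le> M + \<eta> * r"
    proof
      fix r assume "r \<in> {0..B}"
      then have "m 0 r \<le> M" "0 \<le> \<eta> * r"
        using init \<open>\<eta> > 0\<close> by auto
      then show "m 0 r \<le> M + \<eta> * r"
        by linarith
    qed
    show "\<forall>s\<in>{0..t + 1}. m s 0 \<le> M + \<eta> * 0 \<and> m s B \<le> M + \<eta> * B"
    proof
      fix s assume "s \<in> {0..t + 1}"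
      then have "m s 0 \<le> 0" "m s B \<le> K"
        using side bounded \<open>\<rho> \<le> B\<close> \<open>\<rho> \<ge> 0\<close> by auto
      then show "m s 0 \<le> M + \<eta> * 0 \<and> m s B \<le> M + \<eta> * B"
        using \<open>M \<ge> 0\<close> \<open>\<eta> * B \<ge> \<bar>K\<bar>\<close> by linarith
    qed
    show "\<forall>s\<in>{0<..<t + 1}. \<forall>r\<in>{0<..<B}. upper_barrier_at \<alpha> (\<lambda>s r. M + \<eta> * r) s r"
      using upper_barrier_at_affine \<open>M \<ge> 0\<close> \<open>\<eta> > 0\<close> by simp
  qed
  then have "m t \<rho> \<le> M + \<eta> * \<rho>"
    using \<open>t \<ge> 0\<close> \<open>\<rho> \<ge> 0\<close> \<open>\<rho> \<le> B\<close> by simp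
  then show False
    using \<open>\<eta> * \<rho> < m t \<rho> - M\<close> by linarith
qed

lemma mass_subsolution_le_sup:
  assumes "mass_subsolution \<alpha> m0 m" and "BUC1 m0" and "BUC2 m"
    and "M = Sup (m0 ` {0..})" and "M \<ge> 0"
  shows "\<forall>\<rho>\<ge>0. m0 \<rho> \<le> M" and "\<forall>t\<ge>0. \<forall>\<rho>\<ge>0. m t \<rho> \<le> M"
proof -
  have "bdd_above (m0 ` {0..})"
    using \<open>BUC1 m0\<close> unfolding BUC1_def by (auto intro: bounded_imp_bdd_above)
  then show m0_le: "\<forall>\<rho>\<ge>0. m0 \<rho> \<le> M"
    unfolding \<open>M = Sup (m0 ` {0..})\<close> by (auto intro: cSUP_upper)
  obtain K where K: "\<forall>z\<in>quadrant. norm ((\<lambda>(t, \<rho>). m t \<rho>) z) \<le> K"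
    using \<open>BUC2 m\<close> unfolding BUC2_def bounded_iff by auto
  have "\<forall>t\<ge>0. \<forall>\<rho>\<ge>0. m t \<rho> \<le> K"
  proof (intro allI impI)
    fix t \<rho> :: real assume "t \<ge> 0" "\<rho> \<ge> 0"
    then have "\<bar>m t \<rho>\<bar> \<le> K"
      using K unfolding quadrant_def by fastforce
    then show "m t \<rho> \<le> K"
      by simp
  qed
  then show "\<forall>t\<ge>0. \<forall>\<rho>\<ge>0. m t \<rho> \<le> M"
    using mass_subsolution_le_bound[OF assms(1) m0_le \<open>M \<ge> 0\<close>] by blast
qed

definition barrier :: "real \<Rightarrow> real \<Rightarrow> real \<Rightarrow> real \<Rightarrow> real \<Rightarrow> real \<Rightarrow> real" where
  "barrier \<beta> C b \<tau> t \<rho> = C * posp_pow \<beta> (\<rho> - b) * (t + \<tau>) powr (1 - \<beta>)"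

lemma barrier_has_derivative:
  assumes "\<beta> > 1" and "t + \<tau> > 0"
  shows "((\<lambda>z. barrier \<beta> C b \<tau> (fst z) (snd z)) has_derivative
    (\<lambda>z. C * (1 - \<beta>) * posp_pow \<beta> (\<rho> - b) * (t + \<tau>) powr (- \<beta>) * fst z
       + C * \<beta> * posp_pow (\<beta> - 1) (\<rho> - b) * (t + \<tau>) powr (1 - \<beta>) * snd z)) (at (t, \<rho>))"
proof -
  have "((\<lambda>z. snd z - b) has_derivative snd) (at (t, \<rho>))"
    by (auto intro!: derivative_eq_intros)
  from DERIV_compose_FDERIV[OF posp_pow_has_real_derivative[OF assms(1)] this]
  have space: "((\<lambda>z. posp_pow \<beta> (snd z - b)) has_derivative
      (\<lambda>z. snd z * (\<beta> * posp_pow (\<beta> - 1) (\<rho> - b)))) (at (t, \<rho>))"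
    by simp
  have "((\<lambda>x. x powr (1 - \<beta>)) has_real_derivative (1 - \<beta>) * (t + \<tau>) powr (- \<beta>))
      (at (fst (t, \<rho>) + \<tau>))"
    using has_real_derivative_powr[OF assms(2), of "1 - \<beta>"] by simp
  moreover have "((\<lambda>z. fst z + \<tau>) has_derivative fst) (at (t, \<rho>))"
    by (auto intro!: derivative_eq_intros)
  ultimately have time: "((\<lambda>z. (fst z + \<tau>) powr (1 - \<beta>)) has_derivative
      (\<lambda>z. fst z * ((1 - \<beta>) * (t + \<tau>) powr (- \<beta>)))) (at (t, \<rho>))"
    by (rule DERIV_compose_FDERIV)
  have "((\<lambda>z. C * (posp_pow \<beta> (snd z - b) * (fst z + \<tau>) powr (1 - \<beta>))) has_derivative
      (\<lambda>z. C * (posp_pow \<beta> (\<rho> - b) * (fst z * ((1 - \<beta>) * (t + \<tau>) powr (- \<beta>)))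
        + snd z * (\<beta> * posp_pow (\<beta> - 1) (\<rho> - b)) * (t + \<tau>) powr (1 - \<beta>)))) (at (t, \<rho>))"
    using has_derivative_mult[OF space time] by (intro has_derivative_mult_right) simp
  then show ?thesis
    unfolding barrier_def mult.assoc[of C]
    by (rule has_derivative_eq_rhs) (simp add: fun_eq_iff algebra_simps)
qed

lemma continuous_on_barrier:
  assumes "\<beta> > 1" and "\<tau> > 0"
  shows "continuous_on ({0..} \<times> UNIV) (\<lambda>z. barrier \<beta> C b \<tau> (fst z) (snd z))"
proof (intro continuous_at_imp_continuous_on ballI)
  fix z :: "real \<times> real" assume "z \<in> {0..} \<times> UNIV"
  then show "isCont (\<lambda>z. barrier \<beta> C b \<tau> (fst z) (snd z)) z"
    using barrier_has_derivative[OF \<open>\<beta> > 1\<close>, of "fst z" \<tau> C b "snd z"] \<open>\<tau> > 0\<close>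
    by (auto dest: has_derivative_continuous)
qed

lemma barrier_hamilton_jacobi_ineq:
  assumes "\<alpha> > 1" and \<beta>: "\<beta> = \<alpha> / (\<alpha> - 1)" and "C > 0"
    and C: "C powr (\<alpha> - 1) * (K * \<beta> powr \<alpha>) \<ge> \<beta> - 1"
    and "u > 0" and "y \<ge> K"
  shows "C * (1 - \<beta>) * posp_pow \<beta> x * u powr (- \<beta>)
    + posp_pow \<alpha> (C * \<beta> * posp_pow (\<beta> - 1) x * u powr (1 - \<beta>)) * y \<ge> 0"
proof (cases "x > 0")
  case False
  then show ?thesis
    unfolding posp_pow_def by simp
next
  case True
  have "\<beta> > 1"
    using \<open>\<alpha> > 1\<close> unfolding \<beta> by (simp add: field_simps)
  text \<open>This is where \<open>\<beta> = \<alpha> / (\<alpha> - 1)\<close> enters: both terms become multiples of \<open>(x / u) powr \<beta>\<close>.\<close>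
  have "(\<beta> - 1) * \<alpha> = \<beta>" "(1 - \<beta>) * \<alpha> = - \<beta>"
    using \<open>\<alpha> > 1\<close> unfolding \<beta> by (simp_all add: field_simps)
  define Q where "Q = x powr \<beta> * u powr (- \<beta>)"
  have "Q > 0"
    unfolding Q_def using True \<open>u > 0\<close> by simp
  have "posp_pow \<alpha> (C * \<beta> * posp_pow (\<beta> - 1) x * u powr (1 - \<beta>))
      = C powr \<alpha> * \<beta> powr \<alpha> * (x powr (\<beta> - 1)) powr \<alpha> * (u powr (1 - \<beta>)) powr \<alpha>"
    using True \<open>C > 0\<close> \<open>\<beta> > 1\<close> \<open>u > 0\<close> by (simp add: posp_pow_def powr_mult)
  also have "\<dots> = C * C powr (\<alpha> - 1) * \<beta> powr \<alpha> * Q"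
  proof -
    have "C powr \<alpha> = C * C powr (\<alpha> - 1)"
      using \<open>C > 0\<close> by (simp add: powr_diff)
    moreover have "(x powr (\<beta> - 1)) powr \<alpha> = x powr \<beta>" "(u powr (1 - \<beta>)) powr \<alpha> = u powr (- \<beta>)"
      by (simp_all add: powr_powr \<open>(\<beta> - 1) * \<alpha> = \<beta>\<close> \<open>(1 - \<beta>) * \<alpha> = - \<beta>\<close>)
    ultimately show ?thesis
      using \<open>C > 0\<close> by (simp add: Q_def)
  qed
  finally have eq: "posp_pow \<alpha> (C * \<beta> * posp_pow (\<beta> - 1) x * u powr (1 - \<beta>))
      = C * C powr (\<alpha> - 1) * \<beta> powr \<alpha> * Q" .
  have "(C * C powr (\<alpha> - 1) * \<beta> powr \<alpha> * Q) * K \<le> (C * C powr (\<alpha> - 1) * \<beta> powr \<alpha> * Q) * y"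
    using \<open>y \<ge> K\<close> \<open>C > 0\<close> \<open>Q > 0\<close> by (intro mult_left_mono) auto
  then have "posp_pow \<alpha> (C * \<beta> * posp_pow (\<beta> - 1) x * u powr (1 - \<beta>)) * y
      \<ge> C * (C powr (\<alpha> - 1) * (K * \<beta> powr \<alpha>)) * Q"
    unfolding eq by (simp add: ac_simps)
  moreover have "C * (C powr (\<alpha> - 1) * (K * \<beta> powr \<alpha>)) * Q \<ge> C * (\<beta> - 1) * Q"
    using C \<open>C > 0\<close> \<open>Q > 0\<close> by (intro mult_right_mono mult_left_mono) auto
  moreover have "C * (1 - \<beta>) * posp_pow \<beta> x * u powr (- \<beta>) = - (C * (\<beta> - 1) * Q)"
    using True unfolding Q_def posp_pow_def by (simp add: algebra_simps)
  ultimately show ?thesis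
    by linarith
qed

lemma barrier_nonneg: "C \<ge> 0 \<Longrightarrow> barrier \<beta> C b \<tau> t \<rho> \<ge> 0"
  unfolding barrier_def posp_pow_def by simp

lemma upper_barrier_at_truncated_barrier:
  fixes \<alpha> \<beta> C K M \<delta> b \<tau> t \<rho> :: real
  assumes "\<alpha> > 1" and \<beta>: "\<beta> = \<alpha> / (\<alpha> - 1)" and "C > 0"
    and C: "C powr (\<alpha> - 1) * (K * \<beta> powr \<alpha>) \<ge> \<beta> - 1"
    and "t + \<tau> > 0" and "K \<le> M - \<delta>"
  defines "w \<equiv> \<lambda>s r. min M (M - \<delta> + barrier \<beta> C b \<tau> s r)"
  shows "upper_barrier_at \<alpha> w t \<rho>"
proof (cases "M \<le> M - \<delta> + barrier \<beta> C b \<tau> t \<rho>")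
  case True
  then have "(0, 0) \<in> frechet_superdiff w t \<rho>"
    unfolding w_def by (intro frechet_superdiff_at_max) simp
  then show ?thesis
    unfolding upper_barrier_at_def by (intro exI[of _ 0]) (simp add: posp_pow_def)
next
  case False
  have "\<beta> > 1"
    using \<open>\<alpha> > 1\<close> unfolding \<beta> by (simp add: field_simps)
  define p1 where "p1 = C * (1 - \<beta>) * posp_pow \<beta> (\<rho> - b) * (t + \<tau>) powr (- \<beta>)"
  define p2 where "p2 = C * \<beta> * posp_pow (\<beta> - 1) (\<rho> - b) * (t + \<tau>) powr (1 - \<beta>)"
  have "((\<lambda>z. M - \<delta> + barrier \<beta> C b \<tau> (fst z) (snd z)) has_derivative (\<lambda>z. p1 * fst z + p2 * snd z))
      (at (t, \<rho>))"
    unfolding p1_def p2_def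
    by (rule has_derivative_eq_rhs[OF has_derivative_add[OF has_derivative_const
          barrier_has_derivative[OF \<open>\<beta> > 1\<close> \<open>t + \<tau> > 0\<close>]]]) simp
  then have smooth: "(p1, p2) \<in> frechet_superdiff (\<lambda>s r. M - \<delta> + barrier \<beta> C b \<tau> s r) t \<rho>"
    by (rule has_derivative_imp_frechet_superdiff)
  have "(p1, p2) \<in> frechet_superdiff w t \<rho>"
  proof (rule frechet_superdiff_touching[OF zero_less_one _ smooth])
    show "w s r - w t \<rho> \<le> (M - \<delta> + barrier \<beta> C b \<tau> s r) - (M - \<delta> + barrier \<beta> C b \<tau> t \<rho>)" for s r
      using False unfolding w_def by simp
  qed
  moreover have "p1 + posp_pow \<alpha> p2 * y \<ge> 0" if "y \<ge> w t \<rho>" for y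
  proof -
    have "y \<ge> K"
      using that False \<open>K \<le> M - \<delta>\<close> barrier_nonneg[of C \<beta> b \<tau> t \<rho>] \<open>C > 0\<close>
      unfolding w_def by linarith
    then show ?thesis
      unfolding p1_def p2_def
      by (rule barrier_hamilton_jacobi_ineq[OF \<open>\<alpha> > 1\<close> \<beta> \<open>C > 0\<close> C \<open>t + \<tau> > 0\<close>])
  qed
  ultimately show ?thesis
    unfolding upper_barrier_at_def by blast
qed

lemma barrier_mono:
  assumes "\<beta> \<ge> 1" and "C \<ge> 0" and "0 < t' + \<tau>'" and "t' + \<tau>' \<le> t + \<tau>" and "\<rho> \<le> \<rho>'"
  shows "barrier \<beta> C b \<tau> t \<rho> \<le> barrier \<beta> C b \<tau>' t' \<rho>'"
proof -
  have "posp_pow \<beta> (\<rho> - b) \<le> posp_pow \<beta> (\<rho>' - b)"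
    unfolding posp_pow_def using assms by (intro powr_mono2) auto
  moreover have "(t + \<tau>) powr (1 - \<beta>) \<le> (t' + \<tau>') powr (1 - \<beta>)"
    using assms by (intro powr_mono2') auto
  ultimately show ?thesis
    unfolding barrier_def using \<open>C \<ge> 0\<close>
    by (intro mult_mono mult_left_mono) (auto simp: posp_pow_def)
qed

lemma barrier_shifted:
  "x \<ge> 0 \<Longrightarrow> barrier \<beta> C b \<tau> t (b + x) = C * x powr \<beta> * (t + \<tau>) powr (1 - \<beta>)"
  unfolding barrier_def posp_pow_def by simp

lemma barrier_level_in_time:
  assumes "\<beta> > 1" and "C > 0" and "x > 0" and "\<delta> > 0"
  obtains \<tau> where "\<tau> > 0" and "barrier \<beta> C b \<tau> 0 (b + x) = \<delta>"
proof
  define \<tau> where "\<tau> = (C * x powr \<beta> / \<delta>) powr (1 / (\<beta> - 1))"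
  show "\<tau> > 0"
    unfolding \<tau>_def using assms by simp
  have "1 / (\<beta> - 1) * (1 - \<beta>) = -1"
    using assms by (simp add: field_simps)
  then have "\<tau> powr (1 - \<beta>) = (C * x powr \<beta> / \<delta>) powr (-1)"
    unfolding \<tau>_def by (simp add: powr_powr)
  also have "\<dots> = \<delta> / (C * x powr \<beta>)"
    using assms by (simp add: powr_minus_divide)
  finally have "\<tau> powr (1 - \<beta>) = \<delta> / (C * x powr \<beta>)" .
  then show "barrier \<beta> C b \<tau> 0 (b + x) = \<delta>"
    using assms by (simp add: barrier_shifted)
qed

lemma barrier_level_in_space:
  assumes "\<beta> > 0" and "C > 0" and "t + \<tau> > 0" and "\<delta> > 0"
  obtains x where "x > 0" and "barrier \<beta> C b \<tau> t (b + x) = \<delta>"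
proof
  define x where "x = (\<delta> * (t + \<tau>) powr (\<beta> - 1) / C) powr (1 / \<beta>)"
  show "x > 0"
    unfolding x_def using assms by simp
  have "x powr \<beta> * (t + \<tau>) powr (1 - \<beta>) = \<delta> / C"
    unfolding x_def using assms by (simp add: powr_powr powr_diff)
  then show "barrier \<beta> C b \<tau> t (b + x) = \<delta>"
    using assms \<open>x > 0\<close> by (simp add: barrier_shifted mult.assoc)
qed

lemma barrier_constant_exists:
  fixes \<alpha> \<beta> K :: real
  assumes "\<alpha> > 1" and "\<beta> > 1" and "K > 0"
  obtains C where "C > 0" and "C powr (\<alpha> - 1) * (K * \<beta> powr \<alpha>) \<ge> \<beta> - 1"
proof
  define C where "C = ((\<beta> - 1) / (K * \<beta> powr \<alpha>)) powr (1 / (\<alpha> - 1))"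
  show "C > 0"
    unfolding C_def using assms by simp
  have "C powr (\<alpha> - 1) = (\<beta> - 1) / (K * \<beta> powr \<alpha>)"
    unfolding C_def using assms by (simp add: powr_powr)
  then show "C powr (\<alpha> - 1) * (K * \<beta> powr \<alpha>) \<ge> \<beta> - 1"
    using assms by simp
qed

lemma mass_subsolution_le_truncated_barrier:
  fixes m :: "real \<Rightarrow> real \<Rightarrow> real" and m0 :: "real \<Rightarrow> real"
  assumes "\<alpha> > 1" and \<beta>: "\<beta> = \<alpha> / (\<alpha> - 1)" and "mass_subsolution \<alpha> m0 m"
    and m_le: "\<forall>t\<ge>0. \<forall>\<rho>\<ge>0. m t \<rho> \<le> M"
    and mono: "mono_on {0..} m0" and m0_le: "\<forall>\<rho>\<ge>0. m0 \<rho> \<le> M"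
    and "C > 0" and C: "C powr (\<alpha> - 1) * (K * \<beta> powr \<alpha>) \<ge> \<beta> - 1"
    and "K \<ge> 0" and "K \<le> M - \<delta>" and "\<delta> \<ge> 0" and "\<rho>1 \<ge> 0" and "\<delta> \<le> M - m0 \<rho>1" and "\<tau> > 0"
    and barrier_init: "barrier \<beta> C b \<tau> 0 \<rho>1 \<ge> \<delta>"
    and barrier_side: "barrier \<beta> C b \<tau> T B \<ge> \<delta>"
    and "0 \<le> t" and "t < T" and "0 \<le> \<rho>" and "\<rho> \<le> B"
  shows "m t \<rho> \<le> min M (M - \<delta> + barrier \<beta> C b \<tau> t \<rho>)"
proof -
  have contm: "continuous_on quadrant (\<lambda>(t, \<rho>). m t \<rho>)"
    and sub: "\<forall>t>0. \<forall>\<rho>>0. \<forall>(p1, p2) \<in> frechet_superdiff m t \<rho>. p1 + posp_pow \<alpha> p2 * m t \<rho> \<le> 0"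
    and init: "\<forall>\<rho>\<ge>0. m 0 \<rho> \<le> m0 \<rho>" and side: "\<forall>t\<ge>0. m t 0 \<le> 0"
    using \<open>mass_subsolution \<alpha> m0 m\<close> unfolding mass_subsolution_def by auto
  have "\<beta> > 1"
    using \<open>\<alpha> > 1\<close> unfolding \<beta> by (simp add: field_simps)
  define w where "w s r = min M (M - \<delta> + barrier \<beta> C b \<tau> s r)" for s r
  have w_ge: "w s r \<ge> M - \<delta>" for s r
    unfolding w_def using barrier_nonneg[of C \<beta> b \<tau> s r] \<open>C > 0\<close> \<open>\<delta> \<ge> 0\<close> by simp
  have w_top: "w s r = M" if "barrier \<beta> C b \<tau> s r \<ge> \<delta>" for s r
    unfolding w_def using that by simp
  have mono_\<tau>: "barrier \<beta> C b \<tau> s r \<le> barrier \<beta> C b \<tau> s' r'"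
    if "0 \<le> s'" "s' \<le> s" "r \<le> r'" for s r s' r'
    using barrier_mono[of \<beta> C s' \<tau> s \<tau> r r' b] that \<open>\<beta> > 1\<close> \<open>C > 0\<close> \<open>\<tau> > 0\<close> by simp
  have "\<forall>t\<in>{0..<T}. \<forall>\<rho>\<in>{0..B}. m t \<rho> \<le> w t \<rho>"
  proof (rule comparison_on_rectangle[OF contm sub order_refl])
    have "continuous_on ({0..T} \<times> {0..B}) (\<lambda>z. barrier \<beta> C b \<tau> (fst z) (snd z))"
      by (rule continuous_on_subset[OF continuous_on_barrier[OF \<open>\<beta> > 1\<close> \<open>\<tau> > 0\<close>]]) auto
    then show "continuous_on ({0..T} \<times> {0..B}) (\<lambda>(s, r). w s r)"
      unfolding w_def case_prod_beta' by (intro continuous_intros)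
    show "\<forall>r\<in>{0..B}. m 0 r \<le> w 0 r"
    proof
      fix r assume "r \<in> {0..B}"
      show "m 0 r \<le> w 0 r"
      proof (cases "r \<ge> \<rho>1")
        case True
        then show ?thesis
          using w_top mono_\<tau>[of 0 0 \<rho>1 r] barrier_init init m0_le \<open>r \<in> {0..B}\<close> by fastforce
      next
        case False
        then have "m0 r \<le> m0 \<rho>1"
          using \<open>r \<in> {0..B}\<close> \<open>\<rho>1 \<ge> 0\<close> by (intro mono_onD[OF mono]) auto
        then show ?thesis
          using init w_ge[of 0 r] \<open>\<delta> \<le> M - m0 \<rho>1\<close> \<open>r \<in> {0..B}\<close> by fastforce
      qed
    qed
    show "\<forall>s\<in>{0..T}. m s 0 \<le> w s 0 \<and> m s B \<le> w s B"
    proof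
      fix s assume "s \<in> {0..T}"
      then have "m s 0 \<le> 0" "m s B \<le> M"
        using side m_le \<open>0 \<le> \<rho>\<close> \<open>\<rho> \<le> B\<close> by auto
      moreover have "w s B = M"
        using w_top barrier_side mono_\<tau>[of s T B B] \<open>s \<in> {0..T}\<close> by fastforce
      ultimately show "m s 0 \<le> w s 0 \<and> m s B \<le> w s B"
        using w_ge[of s 0] \<open>K \<ge> 0\<close> \<open>K \<le> M - \<delta>\<close> by linarith
    qed
    show "\<forall>s\<in>{0<..<T}. \<forall>r\<in>{0<..<B}. upper_barrier_at \<alpha> w s r"
      using upper_barrier_at_truncated_barrier[OF \<open>\<alpha> > 1\<close> \<beta> \<open>C > 0\<close> C _ \<open>K \<le> M - \<delta>\<close>] \<open>\<tau> > 0\<close>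
      unfolding w_def by (metis add_pos_pos greaterThanLessThan_iff)
  qed
  then show ?thesis
    using \<open>0 \<le> t\<close> \<open>t < T\<close> \<open>0 \<le> \<rho>\<close> \<open>\<rho> \<le> B\<close> unfolding w_def by simp
qed

lemma mass_subsolution_lt_sup_near_edge:
  fixes m :: "real \<Rightarrow> real \<Rightarrow> real" and m0 :: "real \<Rightarrow> real"
  assumes "\<alpha> > 1" and \<beta>: "\<beta> = \<alpha> / (\<alpha> - 1)" and sub: "mass_subsolution \<alpha> m0 m"
    and m_le: "\<forall>t\<ge>0. \<forall>\<rho>\<ge>0. m t \<rho> \<le> M"
    and mono: "mono_on {0..} m0" and m0_le: "\<forall>\<rho>\<ge>0. m0 \<rho> \<le> M"
    and "C > 0" and C: "C powr (\<alpha> - 1) * (K * \<beta> powr \<alpha>) \<ge> \<beta> - 1" and "K \<ge> 0"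
    and "t0 > 0" and "\<rho>1 > 0" and "d > 0"
    and gap: "(C * 2 powr \<beta> * t0 powr (1 - \<beta>) + 1) * d powr \<beta> \<le> \<delta>"
    and "\<delta> \<le> M - m0 \<rho>1" and "K \<le> M - \<delta>"
    and "0 \<le> \<rho>" and "\<rho> \<le> \<rho>1 + 3 / 2 * d"
  shows "m t0 \<rho> < M"
proof -
  have "\<beta> > 1"
    using \<open>\<alpha> > 1\<close> unfolding \<beta> by (simp add: field_simps)
  have "d powr \<beta> > 0" "C * 2 powr \<beta> * t0 powr (1 - \<beta>) \<ge> 0"
    using \<open>d > 0\<close> \<open>C > 0\<close> by simp_all
  then have "\<delta> > 0"
    using gap by (smt (verit) mult_pos_pos)
  define b where "b = \<rho>1 - d / 2"
  have "d / 2 > 0"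
    using \<open>d > 0\<close> by simp
  obtain \<tau> where "\<tau> > 0" and \<tau>: "barrier \<beta> C b \<tau> 0 (b + d / 2) = \<delta>"
    by (rule barrier_level_in_time[OF \<open>\<beta> > 1\<close> \<open>C > 0\<close> \<open>d / 2 > 0\<close> \<open>\<delta> > 0\<close>])
  have "\<beta> > 0" "t0 + 1 + \<tau> > 0"
    using \<open>\<beta> > 1\<close> \<open>\<tau> > 0\<close> \<open>t0 > 0\<close> by simp_all
  then obtain X where "X > 0" and X: "barrier \<beta> C b \<tau> (t0 + 1) (b + X) = \<delta>"
    using barrier_level_in_space[OF _ \<open>C > 0\<close> _ \<open>\<delta> > 0\<close>] by blast
  text \<open>
    Thus the truncated barrier equals \<open>M\<close> initially from \<open>\<rho>1\<close> on, and on the right edge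
    \<open>b + X + 2 d\<close> up to time \<open>t0 + 1\<close>.
  \<close>
  have "barrier \<beta> C b \<tau> 0 \<rho>1 \<ge> \<delta>"
    using \<tau> unfolding b_def by simp
  moreover have "barrier \<beta> C b \<tau> (t0 + 1) (b + X) \<le> barrier \<beta> C b \<tau> (t0 + 1) (b + X + 2 * d)"
    using \<open>\<beta> > 1\<close> \<open>C > 0\<close> \<open>t0 + 1 + \<tau> > 0\<close> \<open>d > 0\<close> by (intro barrier_mono) auto
  then have "barrier \<beta> C b \<tau> (t0 + 1) (b + X + 2 * d) \<ge> \<delta>"
    using X by simp
  moreover have "\<rho> \<le> b + X + 2 * d"
    using \<open>\<rho> \<le> \<rho>1 + 3 / 2 * d\<close> \<open>X > 0\<close> unfolding b_def by simp
  ultimately have "m t0 \<rho> \<le> min M (M - \<delta> + barrier \<beta> C b \<tau> t0 \<rho>)"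
    using mass_subsolution_le_truncated_barrier[OF \<open>\<alpha> > 1\<close> \<beta> sub m_le mono m0_le
        \<open>C > 0\<close> C \<open>K \<ge> 0\<close> \<open>K \<le> M - \<delta>\<close> _ _ \<open>\<delta> \<le> M - m0 \<rho>1\<close> \<open>\<tau> > 0\<close>]
      \<open>\<delta> > 0\<close> \<open>\<rho>1 > 0\<close> \<open>t0 > 0\<close> \<open>0 \<le> \<rho>\<close> by simp
  also have "\<dots> \<le> M - \<delta> + barrier \<beta> C b \<tau> t0 \<rho>"
    by simp
  also have "barrier \<beta> C b \<tau> t0 \<rho> \<le> barrier \<beta> C b 0 t0 (b + 2 * d)"
    using \<open>t0 > 0\<close> \<open>\<tau> > 0\<close> \<open>\<rho> \<le> \<rho>1 + 3 / 2 * d\<close> \<open>\<beta> > 1\<close> \<open>C > 0\<close>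
    by (intro barrier_mono) (auto simp: b_def)
  also have "\<dots> = C * 2 powr \<beta> * t0 powr (1 - \<beta>) * d powr \<beta>"
    using \<open>d > 0\<close> by (simp add: barrier_shifted powr_mult)
  finally have "m t0 \<rho> \<le> M - \<delta> + C * 2 powr \<beta> * t0 powr (1 - \<beta>) * d powr \<beta>"
    by simp
  then show "m t0 \<rho> < M"
    using gap \<open>d powr \<beta> > 0\<close> unfolding distrib_right by linarith
qed

lemma Limsup_infinity_exceeds:
  fixes f :: "'a \<Rightarrow> ereal"
  assumes "Limsup F f = \<infinity>" and "eventually P F"
  obtains x where "P x" and "f x > ereal A"
proof -
  have "Limsup F f \<le> Sup (f ` {x. P x})"
    unfolding Limsup_def using assms(2) by (intro INF_lower) auto
  then have "ereal A < Sup (f ` {x. P x})"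
    using assms(1) by simp
  then show ?thesis
    using that by (auto simp: less_SUP_iff)
qed

lemma steep_edge_point:
  fixes m0 :: "real \<Rightarrow> real"
  assumes "Limsup (at_left c0) (\<lambda>\<rho>. ereal ((M - m0 \<rho>) / (c0 - \<rho>) powr \<beta>)) = \<infinity>"
    and "c0 > 0" and "A > 0" and "M > 0" and "\<beta> > 0"
  obtains \<rho>1 d where "\<rho>1 > 0" and "d > 0" and "\<rho>1 + d = c0"
    and "A * d powr \<beta> \<le> M - m0 \<rho>1" and "A * d powr \<beta> \<le> M / 2"
proof -
  define d0 where "d0 = min (c0 / 2) ((M / (2 * A)) powr (1 / \<beta>))"
  have "d0 > 0"
    unfolding d0_def using assms by simp
  then have "eventually (\<lambda>\<rho>. \<rho> \<in> {c0 - d0<..<c0}) (at_left c0)"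
    by (intro eventually_at_left_real) simp
  then obtain \<rho>1 where \<rho>1: "\<rho>1 \<in> {c0 - d0<..<c0}"
    and "ereal ((M - m0 \<rho>1) / (c0 - \<rho>1) powr \<beta>) > ereal A"
    by (rule Limsup_infinity_exceeds[OF assms(1)])
  then have ratio: "(M - m0 \<rho>1) / (c0 - \<rho>1) powr \<beta> > A"
    by simp
  define d where "d = c0 - \<rho>1"
  have "d > 0" "d < d0" "\<rho>1 + d = c0"
    using \<rho>1 unfolding d_def by auto
  moreover have "\<rho>1 > 0"
    using \<open>d < d0\<close> \<open>c0 > 0\<close> unfolding d_def d0_def by simp
  moreover have "A * d powr \<beta> \<le> M - m0 \<rho>1"
    using ratio \<open>d > 0\<close> unfolding d_def by (simp add: less_divide_eq)
  moreover have "d powr \<beta> \<le> ((M / (2 * A)) powr (1 / \<beta>)) powr \<beta>"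
    using \<open>d > 0\<close> \<open>d < d0\<close> \<open>\<beta> > 0\<close> unfolding d0_def by (intro powr_mono2) auto
  then have "d powr \<beta> \<le> M / (2 * A)"
    using assms by (simp add: powr_powr)
  then have "A * d powr \<beta> \<le> A * (M / (2 * A))"
    using \<open>A > 0\<close> by (intro mult_left_mono) auto
  then have "A * d powr \<beta> \<le> M / 2"
    using \<open>A > 0\<close> by simp
  ultimately show ?thesis
    using that by blast
qed

lemma free_boundary_gt:
  assumes "\<And>\<rho>. 0 \<le> \<rho> \<Longrightarrow> \<rho> \<le> c \<Longrightarrow> m t \<rho> < M" and "c0 < c"
  shows "free_boundary m M t > ereal c0"
proof -
  have "ereal c0 < ereal c"
    using assms(2) by simp
  also have "ereal c \<le> free_boundary m M t"
    unfolding free_boundary_def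
  proof (rule Inf_greatest)
    fix x assume "x \<in> ereal ` {\<rho>. 0 \<le> \<rho> \<and> m t \<rho> = M}"
    then obtain \<rho> where "x = ereal \<rho>" "0 \<le> \<rho>" "m t \<rho> = M"
      by blast
    then show "ereal c \<le> x"
      using assms(1)[of \<rho>] by force
  qed
  finally show ?thesis .
qed

theorem mainTheorem9:
  fixes \<alpha> c0 M :: real and m0 :: "real \<Rightarrow> real" and m :: "real \<Rightarrow> real \<Rightarrow> real"
  assumes "\<alpha> > 1"
    and "BUC1 m0" and "mono_on {0..} m0" and "m0 0 = 0"
    and "M = Sup (m0 ` {0..})" and "M > 0"
    and "c0 > 0"
    and "\<forall>\<rho>. 0 \<le> \<rho> \<and> \<rho> < c0 \<longrightarrow> m0 \<rho> < M"
    and "\<forall>\<rho>\<ge>c0. m0 \<rho> = M"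
    and "Limsup (at_left c0) (\<lambda>\<rho>. ereal ((M - m0 \<rho>) / (c0 - \<rho>) powr (\<alpha> / (\<alpha> - 1)))) = \<infinity>"
    and "BUC2 m" and "mass_solution \<alpha> m0 m"
  shows "\<forall>t>0. free_boundary m M t > ereal c0"
proof (intro allI impI)
  fix t0 :: real assume "t0 > 0"
  have sub: "mass_subsolution \<alpha> m0 m"
    using \<open>mass_solution \<alpha> m0 m\<close> unfolding mass_solution_def by blast
  have m0_le: "\<forall>\<rho>\<ge>0. m0 \<rho> \<le> M" and m_le: "\<forall>t\<ge>0. \<forall>\<rho>\<ge>0. m t \<rho> \<le> M"
    using mass_subsolution_le_sup[OF sub \<open>BUC1 m0\<close> \<open>BUC2 m\<close> \<open>M = Sup (m0 ` {0..})\<close>] \<open>M > 0\<close> by auto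
  define \<beta> where "\<beta> = \<alpha> / (\<alpha> - 1)"
  have "\<beta> > 1"
    using \<open>\<alpha> > 1\<close> unfolding \<beta>_def by (simp add: field_simps)
  obtain C where "C > 0" and C: "C powr (\<alpha> - 1) * (M / 2 * \<beta> powr \<alpha>) \<ge> \<beta> - 1"
    using barrier_constant_exists[OF \<open>\<alpha> > 1\<close> \<open>\<beta> > 1\<close>, of "M / 2"] \<open>M > 0\<close> by auto
  define A where "A = C * 2 powr \<beta> * t0 powr (1 - \<beta>) + 1"
  have "C * 2 powr \<beta> * t0 powr (1 - \<beta>) \<ge> 0"
    using \<open>C > 0\<close> by simp
  then have "A > 0"
    unfolding A_def by linarith
  have "Limsup (at_left c0) (\<lambda>\<rho>. ereal ((M - m0 \<rho>) / (c0 - \<rho>) powr \<beta>)) = \<infinity>"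
    using assms(10) unfolding \<beta>_def .
  moreover have "\<beta> > 0"
    using \<open>\<beta> > 1\<close> by simp
  ultimately obtain \<rho>1 d where "\<rho>1 > 0" "d > 0" "\<rho>1 + d = c0"
    and "A * d powr \<beta> \<le> M - m0 \<rho>1" and "A * d powr \<beta> \<le> M / 2"
    using steep_edge_point[of c0 M m0 \<beta> A] \<open>c0 > 0\<close> \<open>A > 0\<close> \<open>M > 0\<close> by blast
  have "m t0 \<rho> < M" if "0 \<le> \<rho>" "\<rho> \<le> c0 + d / 2" for \<rho>
    using mass_subsolution_lt_sup_near_edge[OF \<open>\<alpha> > 1\<close> \<beta>_def sub m_le \<open>mono_on {0..} m0\<close> m0_le
        \<open>C > 0\<close> C _ \<open>t0 > 0\<close> \<open>\<rho>1 > 0\<close> \<open>d > 0\<close> _ \<open>A * d powr \<beta> \<le> M - m0 \<rho>1\<close>]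
      that \<open>\<rho>1 + d = c0\<close> \<open>A * d powr \<beta> \<le> M / 2\<close> \<open>M > 0\<close>
    by (simp add: A_def)
  then show "free_boundary m M t0 > ereal c0"
    using \<open>d > 0\<close> by (intro free_boundary_gt) auto
qed

end
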